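(* In the database model described in the context, assume $0<\pi_{\mathcal D}<1$ and let $\mathbf r=(r_1,\dots,r_N)$ satisfy $P(\mathbf{LR}_{\mathcal D}=\mathbf r\mid R\notin\mathcal D)>0$. Then for every subset $\mathcal D'\subseteq\{1,\dots,N\}$, \[ P(R\in\mathcal D'\mid \mathbf{LR}_{\mathcal D}=\mathbf r)=\frac{\sum_{i\in\mathcal D'}r_i\pi_i}{\pi_0+\sum_{k=1}^N r_k\pi_k}, \] and \[ \frac{P(\mathbf{LR}_{\mathcal D}=\mathbf r\mid R\in\mathcal D)}{P(\mathbf{LR}_{\mathcal D}=\mathbf r\mid R\notin\mathcal D)}=\frac{\sum_{i=1}^N r_i\pi_i}{\pi_{\mathcal D}}. \] In particular, if $\pi_i=\pi_{\mathcal D}/N$ for all $1\le i\le N$, this likelihood ratio equals $\frac1N\sum_{i=1}^N r_i$.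
   Context: Let $E$ be a countable set and let $S$, $G$ be $E$-valued random variables such that for every $e\in E$, $P(S=e)>0$ implies $P(G=e)>0$. For $e\in E$ define the likelihood ratio $LR(e)=P(S=e)/P(G=e)$ if $P(G=e)>0$ and $LR(e)=0$ otherwise. Database model: fix $N\ge1$. Let $R$ be a random variable with values in $\{0,1,\dots,N\}$; we write $R\in\mathcal D$ for $R\in\{1,\dots,N\}$ and $R\notin\mathcal D$ for $R=0$. Put $\pi_i=P(R=i)$ for $1\le i\le N$, $\pi_{\mathcal D}=\sum_{i=1}^N\pi_i$ and $\pi_0=1-\pi_{\mathcal D}=P(R=0)$. There are $E$-valued random variables $P_1,\dots,P_N$ such that conditionally on $R=i$ with $1\le i\le N$, they are independent, $P_i$ has the distribution of $S$ and $P_j$ ($j\ne i$) has the distribution of $G$; and conditionally on $R=0$ they are independent, each with the distribution of $G$. Set $\mathbf{LR}_{\mathcal D}=(LR(P_1),\dots,LR(P_N))$. *)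

theory Defs
  imports "HOL-Probability.Probability"
begin

definition cprob :: "'w measure \<Rightarrow> 'w set \<Rightarrow> 'w set \<Rightarrow> real" where
  "cprob M A B = measure M (A \<inter> B) / measure M B"

definition LR :: "'w measure \<Rightarrow> ('w \<Rightarrow> 'e) \<Rightarrow> ('w \<Rightarrow> 'e) \<Rightarrow> 'e \<Rightarrow> real" where
  "LR M S G e =
     (if measure M {w \<in> space M. G w = e} > 0
      then measure M {w \<in> space M. S w = e} / measure M {w \<in> space M. G w = e}
      else 0)"

end

theory Submission
  imports Defs
begin

(* Write A(r) for the event LR(P_j) = r_j for all j in {1..N}, L_j for the level set
   {x. LR x = r_j}, and g = prod_j P(G in L_j) = P(A(r) | R = 0).  On each level set the
   likelihood ratio is the constant r_j, so P(S in L_j) = r_j * P(G in L_j) (summing the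
   pointwise identity over the countable set L_j).  The joint law of (R, P_1, ..., P_N) is
   given on points only; an induction over the coordinates lifts the product formula from
   points to arbitrary product sets.  Together these give the key identity
       P(R = i, A(r)) = pi_i * r_i * g  (1 <= i <= N),     P(R = 0, A(r)) = pi_0 * g,
   and summing over the values of R yields all three claims: the posterior of D',
   the likelihood ratio of "in the database" versus "not in the database", and its value
   for a uniform prior. *)

lemma sets_Collect_count_space:
  assumes "f \<in> measurable M (count_space UNIV)"
  shows "{w \<in> space M. P (f w)} \<in> sets M"
  by (rule measurable_sets_Collect[OF assms]) simp

lemma measure_UN_scaled:
  assumes "finite_measure M" "countable I"
    and "\<And>x. x \<in> I \<Longrightarrow> A x \<in> sets M" "\<And>x. x \<in> I \<Longrightarrow> Y x \<in> sets M"
    and "disjoint_family_on A I" "disjoint_family_on Y I" "c \<ge> 0"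
    and "\<And>x. x \<in> I \<Longrightarrow> measure M (A x) = c * measure M (Y x)"
  shows "measure M (\<Union>x\<in>I. A x) = c * measure M (\<Union>x\<in>I. Y x)"
proof -
  interpret finite_measure M by fact
  have "emeasure M (\<Union>x\<in>I. A x) = (\<integral>\<^sup>+x. emeasure M (A x) \<partial>count_space I)"
    by (rule emeasure_UN_countable) (use assms in auto)
  also have "\<dots> = (\<integral>\<^sup>+x. ennreal c * emeasure M (Y x) \<partial>count_space I)"
    by (rule nn_integral_cong) (simp add: emeasure_eq_measure assms ennreal_mult)
  also have "\<dots> = ennreal c * (\<integral>\<^sup>+x. emeasure M (Y x) \<partial>count_space I)"
    by (rule nn_integral_cmult) simp
  also have "(\<integral>\<^sup>+x. emeasure M (Y x) \<partial>count_space I) = emeasure M (\<Union>x\<in>I. Y x)"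
    by (rule emeasure_UN_countable[symmetric]) (use assms in auto)
  finally have "ennreal (measure M (\<Union>x\<in>I. A x)) = ennreal (c * measure M (\<Union>x\<in>I. Y x))"
    by (simp add: emeasure_eq_measure ennreal_mult assms)
  then show ?thesis using assms(7) by (simp add: ennreal_inj)
qed

(* On a set where the likelihood ratio is constantly c, the law of S is c times the law
   of G; points with P(G = x) = 0 carry no S-mass by absolute continuity. *)
lemma measure_LR_level_set:
  fixes S G :: "'w \<Rightarrow> 'e::countable"
  assumes "finite_measure M"
    and S: "S \<in> measurable M (count_space UNIV)" and G: "G \<in> measurable M (count_space UNIV)"
    and abs_cont: "\<And>e. measure M {w \<in> space M. S w = e} > 0 \<Longrightarrow> measure M {w \<in> space M. G w = e} > 0"
    and level: "\<And>x. x \<in> L \<Longrightarrow> LR M S G x = c"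
  shows "measure M {w \<in> space M. S w \<in> L} = c * measure M {w \<in> space M. G w \<in> L}"
proof (cases "L = {}")
  case False
  then obtain x0 where "x0 \<in> L" by blast
  then have "c \<ge> 0" using level[of x0] by (auto simp: LR_def)
  have point: "measure M {w \<in> space M. S w = x} = c * measure M {w \<in> space M. G w = x}"
    if "x \<in> L" for x
  proof (cases "measure M {w \<in> space M. G w = x} > 0")
    case True
    then show ?thesis using level[OF that] by (auto simp: LR_def field_simps)
  next
    case False
    then have "measure M {w \<in> space M. G w = x} = 0" "measure M {w \<in> space M. S w = x} = 0"
      using abs_cont[of x] by (metis less_eq_real_def measure_nonneg)+
    then show ?thesis by simp
  qed
  have "measure M (\<Union>x\<in>L. {w \<in> space M. S w = x}) = c * measure M (\<Union>x\<in>L. {w \<in> space M. G w = x})"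
    by (rule measure_UN_scaled)
       (use assms \<open>c \<ge> 0\<close> point in \<open>auto simp: disjoint_family_on_def intro: sets_Collect_count_space\<close>)
  moreover have "(\<Union>x\<in>L. {w \<in> space M. S w = x}) = {w \<in> space M. S w \<in> L}"
    and "(\<Union>x\<in>L. {w \<in> space M. G w = x}) = {w \<in> space M. G w \<in> L}" by auto
  ultimately show ?thesis by simp
qed simp

(* Lifting a product formula from points to product sets, one coordinate at a time:
   the coordinates in J are constrained to sets B j, the others to single points e j.
   Induction on J; the new coordinate is eliminated by decomposing B j into points. *)
lemma measure_product_fibre_mixed:
  fixes X H :: "'i \<Rightarrow> 'w \<Rightarrow> 'e::countable"
  assumes fm: "finite_measure M" and E: "E \<in> sets M" and I: "finite I"
    and X: "\<And>j. j \<in> I \<Longrightarrow> X j \<in> measurable M (count_space UNIV)"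
    and H: "\<And>j. j \<in> I \<Longrightarrow> H j \<in> measurable M (count_space UNIV)"
    and c: "c \<ge> 0"
    and points: "\<And>e. measure M (E \<inter> {w \<in> space M. \<forall>j\<in>I. X j w = e j})
                      = c * (\<Prod>j\<in>I. measure M {w \<in> space M. H j w = e j})"
    and J: "J \<subseteq> I"
  shows "measure M (E \<inter> {w \<in> space M. \<forall>j\<in>I. X j w \<in> (if j \<in> J then B j else {e j})})
         = c * (\<Prod>j\<in>I. measure M {w \<in> space M. H j w \<in> (if j \<in> J then B j else {e j})})"
  using finite_subset[OF J I] J
proof (induction J arbitrary: e rule: finite_induct)
  case empty
  then show ?case using points[of e] by simp
next
  case (insert j J)
  let ?C = "\<lambda>J e k. if k \<in> J then B k else {e k}"
  define fibre where "fibre x = E \<inter> {w \<in> space M. \<forall>k\<in>I. X k w \<in> ?C J (e(j := x)) k}" for x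
  define rest where "rest = (\<Prod>k\<in>I - {j}. measure M {w \<in> space M. H k w \<in> ?C (insert j J) e k})"
  have j: "j \<in> I" "j \<notin> J" using insert by auto
  have rest_nonneg: "c * rest \<ge> 0" unfolding rest_def using c by (simp add: prod_nonneg)
  have fibre_sets: "fibre x \<in> sets M" for x
    unfolding fibre_def using E X I by (auto intro!: sets.sets_Collect_finite_All sets_Collect_count_space)
  have fibre_measure: "measure M (fibre x) = c * rest * measure M {w \<in> space M. H j w = x}" for x
  proof -
    have "measure M (fibre x) = c * (\<Prod>k\<in>I. measure M {w \<in> space M. H k w \<in> ?C J (e(j := x)) k})"
      unfolding fibre_def using insert by blast
    also have "(\<Prod>k\<in>I. measure M {w \<in> space M. H k w \<in> ?C J (e(j := x)) k})
        = measure M {w \<in> space M. H j w = x} * rest"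
    proof -
      have "(\<Prod>k\<in>I - {j}. measure M {w \<in> space M. H k w \<in> ?C J (e(j := x)) k}) = rest"
        unfolding rest_def by (rule prod.cong) auto
      then show ?thesis using I j by (simp add: prod.remove)
    qed
    finally show ?thesis by (simp add: mult_ac)
  qed
  have "measure M (\<Union>x\<in>B j. fibre x) = c * rest * measure M (\<Union>x\<in>B j. {w \<in> space M. H j w = x})"
    by (rule measure_UN_scaled[OF fm])
       (use j fibre_sets H rest_nonneg fibre_measure in
        \<open>auto simp: disjoint_family_on_def fibre_def intro: sets_Collect_count_space\<close>)
  moreover have "(\<Union>x\<in>B j. fibre x) = E \<inter> {w \<in> space M. \<forall>k\<in>I. X k w \<in> ?C (insert j J) e k}"
    using j unfolding fibre_def by (auto; metis)
  moreover have "(\<Union>x\<in>B j. {w \<in> space M. H j w = x}) = {w \<in> space M. H j w \<in> ?C (insert j J) e j}"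
    by auto
  moreover have "(\<Prod>k\<in>I. measure M {w \<in> space M. H k w \<in> ?C (insert j J) e k})
      = measure M {w \<in> space M. H j w \<in> ?C (insert j J) e j} * rest"
    unfolding rest_def using I j by (simp only: prod.remove)
  ultimately show ?case by (simp add: mult_ac)
qed

lemma measure_product_fibre:
  fixes X H :: "'i \<Rightarrow> 'w \<Rightarrow> 'e::countable"
  assumes "finite_measure M" "E \<in> sets M" "finite I"
    and "\<And>j. j \<in> I \<Longrightarrow> X j \<in> measurable M (count_space UNIV)"
    and "\<And>j. j \<in> I \<Longrightarrow> H j \<in> measurable M (count_space UNIV)"
    and "c \<ge> 0"
    and "\<And>e. measure M (E \<inter> {w \<in> space M. \<forall>j\<in>I. X j w = e j})
              = c * (\<Prod>j\<in>I. measure M {w \<in> space M. H j w = e j})"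
  shows "measure M (E \<inter> {w \<in> space M. \<forall>j\<in>I. X j w \<in> B j})
         = c * (\<Prod>j\<in>I. measure M {w \<in> space M. H j w \<in> B j})"
  using measure_product_fibre_mixed[OF assms order_refl, of B undefined] by simp

lemma measure_fibres_sum:
  assumes "finite_measure M" "R \<in> measurable M (count_space UNIV)" "X \<in> sets M" "finite D"
  shows "measure M ({w \<in> space M. R w \<in> D} \<inter> X) = (\<Sum>i\<in>D. measure M ({w \<in> space M. R w = i} \<inter> X))"
proof -
  interpret finite_measure M by fact
  have "{w \<in> space M. R w \<in> D} \<inter> X = (\<Union>i\<in>D. {w \<in> space M. R w = i} \<inter> X)" by auto
  also have "measure M \<dots> = (\<Sum>i\<in>D. measure M ({w \<in> space M. R w = i} \<inter> X))"
  proof (rule finite_measure_finite_Union)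
    show "(\<lambda>i. {w \<in> space M. R w = i} \<inter> X) ` D \<subseteq> sets M"
      using assms(2,3) by (auto intro: sets_Collect_count_space)
  qed (use assms(4) in \<open>auto simp: disjoint_family_on_def\<close>)
  finally show ?thesis .
qed

lemma weighted_mean_uniform:
  fixes p r :: "'a \<Rightarrow> real"
  assumes "(\<Sum>k\<in>I. p k) \<noteq> 0" and uniform: "\<forall>i\<in>I. p i = (\<Sum>k\<in>I. p k) / real (card I)"
  shows "(\<Sum>i\<in>I. r i * p i) / (\<Sum>k\<in>I. p k) = (1 / real (card I)) * (\<Sum>i\<in>I. r i)"
proof -
  define s where "s = (\<Sum>k\<in>I. p k)"
  have "(\<Sum>i\<in>I. r i * p i) = (\<Sum>i\<in>I. r i * (s / real (card I)))"
    using uniform unfolding s_def[symmetric] by (intro sum.cong) auto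
  also have "\<dots> = (\<Sum>i\<in>I. r i) * s / real (card I)"
    by (simp add: sum_distrib_right sum_divide_distrib)
  finally show ?thesis using assms(1) unfolding s_def by simp
qed

(* The database model: R is the index of the source (0 = not in the database), and
   given R = i the profiles P_j are independent, P_i distributed as S, the others as G. *)
locale database_model = prob_space M for M :: "'w measure" +
  fixes S G :: "'w \<Rightarrow> 'e::countable" and R :: "'w \<Rightarrow> nat" and Ps :: "nat \<Rightarrow> 'w \<Rightarrow> 'e" and N :: nat
  assumes S_meas: "S \<in> measurable M (count_space UNIV)"
    and G_meas: "G \<in> measurable M (count_space UNIV)"
    and R_meas: "R \<in> measurable M (count_space UNIV)"
    and Ps_meas: "\<And>j. j \<in> {1..N} \<Longrightarrow> Ps j \<in> measurable M (count_space UNIV)"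
    and abs_cont: "\<And>e. measure M {w \<in> space M. S w = e} > 0 \<Longrightarrow> measure M {w \<in> space M. G w = e} > 0"
    and R_range: "\<And>w. w \<in> space M \<Longrightarrow> R w \<le> N"
    and joint: "\<And>i (e :: nat \<Rightarrow> 'e). i \<le> N \<Longrightarrow>
        measure M {w \<in> space M. R w = i \<and> (\<forall>j\<in>{1..N}. Ps j w = e j)}
        = measure M {w \<in> space M. R w = i} *
          (\<Prod>j\<in>{1..N}. (if j = i then measure M {w \<in> space M. S w = e j}
                                    else measure M {w \<in> space M. G w = e j}))"
begin

abbreviation prior :: "nat \<Rightarrow> real" where
  "prior i \<equiv> measure M {w \<in> space M. R w = i}"

abbreviation LR_event :: "(nat \<Rightarrow> real) \<Rightarrow> 'w set" where
  "LR_event r \<equiv> {w \<in> space M. \<forall>j\<in>{1..N}. LR M S G (Ps j w) = r j}"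

definition null_likelihood :: "(nat \<Rightarrow> real) \<Rightarrow> real" where
  "null_likelihood r = (\<Prod>j\<in>{1..N}. measure M {w \<in> space M. LR M S G (G w) = r j})"

lemma R_event_sets: "{w \<in> space M. R w \<in> D} \<in> sets M"
  using sets_Collect_count_space[OF R_meas] .

lemma LR_event_sets: "LR_event r \<in> sets M"
  using Ps_meas by (auto intro!: sets.sets_Collect_finite_All sets_Collect_count_space)

lemma joint_LR_event:
  assumes "i \<le> N"
  shows "measure M ({w \<in> space M. R w = i} \<inter> LR_event r)
         = prior i * (if i \<in> {1..N} then r i else 1) * null_likelihood r"
proof -
  define H where "H j = (if j = i then S else G)" for j
  have H_meas: "H j \<in> measurable M (count_space UNIV)" for j
    using S_meas G_meas by (simp add: H_def)
  have "measure M ({w \<in> space M. R w = i} \<inter> {w \<in> space M. \<forall>j\<in>{1..N}. Ps j w \<in> {x. LR M S G x = r j}})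
      = prior i * (\<Prod>j\<in>{1..N}. measure M {w \<in> space M. H j w \<in> {x. LR M S G x = r j}})"
  proof (rule measure_product_fibre)
    show "measure M ({w \<in> space M. R w = i} \<inter> {w \<in> space M. \<forall>j\<in>{1..N}. Ps j w = e j})
        = prior i * (\<Prod>j\<in>{1..N}. measure M {w \<in> space M. H j w = e j})" for e
    proof -
      have "{w \<in> space M. R w = i} \<inter> {w \<in> space M. \<forall>j\<in>{1..N}. Ps j w = e j}
          = {w \<in> space M. R w = i \<and> (\<forall>j\<in>{1..N}. Ps j w = e j)}" by blast
      moreover have "measure M {w \<in> space M. H j w = e j}
          = (if j = i then measure M {w \<in> space M. S w = e j} else measure M {w \<in> space M. G w = e j})" for j
        by (simp add: H_def)
      ultimately show ?thesis using joint[OF assms, of e] by simp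
    qed
  qed (use R_meas Ps_meas H_meas in \<open>auto intro: sets_Collect_count_space\<close>)
  also have "(\<Prod>j\<in>{1..N}. measure M {w \<in> space M. H j w \<in> {x. LR M S G x = r j}})
      = (\<Prod>j\<in>{1..N}. (if j = i then r j else 1) * measure M {w \<in> space M. LR M S G (G w) = r j})"
    using measure_LR_level_set[OF _ S_meas G_meas abs_cont, of "{x. LR M S G x = r _}"]
    by (intro prod.cong) (auto simp: H_def)
  also have "\<dots> = (if i \<in> {1..N} then r i else 1) * null_likelihood r"
    by (simp add: prod.distrib null_likelihood_def)
  finally show ?thesis by (simp add: mult_ac)
qed


lemma measure_R_in_LR_event:
  assumes "D \<subseteq> {1..N}"
  shows "measure M ({w \<in> space M. R w \<in> D} \<inter> LR_event r) = (\<Sum>i\<in>D. r i * prior i) * null_likelihood r"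
proof -
  have "finite D" using assms finite_subset by blast
  then have "measure M ({w \<in> space M. R w \<in> D} \<inter> LR_event r)
      = (\<Sum>i\<in>D. measure M ({w \<in> space M. R w = i} \<inter> LR_event r))"
    using measure_fibres_sum[OF _ R_meas LR_event_sets] by (simp add: finite_measure_axioms)
  also have "\<dots> = (\<Sum>i\<in>D. r i * prior i * null_likelihood r)"
  proof (rule sum.cong)
    fix i assume "i \<in> D"
    then have "i \<in> {1..N}" using assms by blast
    then show "measure M ({w \<in> space M. R w = i} \<inter> LR_event r) = r i * prior i * null_likelihood r"
      using joint_LR_event[of i r] by simp
  qed simp
  finally show ?thesis by (simp add: sum_distrib_right)
qed

lemma measure_LR_event:
  "measure M (LR_event r) = (prior 0 + (\<Sum>k\<in>{1..N}. r k * prior k)) * null_likelihood r"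
proof -
  let ?null = "{w \<in> space M. R w \<in> {0}} \<inter> LR_event r"
  let ?database = "{w \<in> space M. R w \<in> {1..N}} \<inter> LR_event r"
  have split: "LR_event r = ?null \<union> ?database"
    using R_range by (auto simp: Suc_le_eq)
  have "?null \<in> sets M" "?database \<in> sets M"
    by (intro sets.Int R_event_sets LR_event_sets)+
  then have "measure M (LR_event r) = measure M ?null + measure M ?database"
    by (subst split, intro finite_measure_Union) auto
  also have "\<dots> = (prior 0 + (\<Sum>k\<in>{1..N}. r k * prior k)) * null_likelihood r"
    using joint_LR_event[of 0 r] measure_R_in_LR_event[of "{1..N}" r] by (simp add: distrib_right)
  finally show ?thesis .
qed
lemma measure_R_in_database: "measure M {w \<in> space M. R w \<in> {1..N}} = (\<Sum>i\<in>{1..N}. prior i)"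
proof -
  have restrict: "{w \<in> space M. P w} \<inter> space M = {w \<in> space M. P w}" for P by blast
  show ?thesis
    using measure_fibres_sum[OF finite_measure_axioms R_meas sets.top, of "{1..N}"] by (simp only: restrict finite_atLeastAtMost)
qed

lemma cprob_LR_event_null:
  assumes "prior 0 \<noteq> 0"
  shows "cprob M (LR_event r) {w \<in> space M. R w = 0} = null_likelihood r"
  using joint_LR_event[of 0 r] assms by (simp add: cprob_def Int_commute)

lemma cprob_LR_event_database:
  "cprob M (LR_event r) {w \<in> space M. R w \<in> {1..N}}
   = (\<Sum>i\<in>{1..N}. r i * prior i) * null_likelihood r / (\<Sum>i\<in>{1..N}. prior i)"
  unfolding cprob_def measure_R_in_database Int_commute[of "LR_event r"]
  using measure_R_in_LR_event[of "{1..N}" r] by simp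

theorem posterior_database:
  assumes "null_likelihood r \<noteq> 0" "D' \<subseteq> {1..N}"
  shows "cprob M {w \<in> space M. R w \<in> D'} (LR_event r)
         = (\<Sum>i\<in>D'. r i * prior i) / (prior 0 + (\<Sum>k\<in>{1..N}. r k * prior k))"
  unfolding cprob_def measure_R_in_LR_event[OF assms(2)] measure_LR_event using assms(1) by simp

theorem likelihood_ratio_database:
  assumes "prior 0 \<noteq> 0" "null_likelihood r \<noteq> 0"
  shows "cprob M (LR_event r) {w \<in> space M. R w \<in> {1..N}} / cprob M (LR_event r) {w \<in> space M. R w = 0}
         = (\<Sum>i\<in>{1..N}. r i * prior i) / (\<Sum>i\<in>{1..N}. prior i)"
  unfolding cprob_LR_event_null[OF assms(1)] cprob_LR_event_database using assms(2) by simp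

end

theorem mainTheorem3:
  fixes M :: "'w measure"
    and S G :: "'w \<Rightarrow> 'e::countable"
    and R :: "'w \<Rightarrow> nat"
    and Ps :: "nat \<Rightarrow> 'w \<Rightarrow> 'e"
    and N :: nat
    and r :: "nat \<Rightarrow> real"
  assumes "prob_space M"
    and "S \<in> measurable M (count_space UNIV)"
    and "G \<in> measurable M (count_space UNIV)"
    and "R \<in> measurable M (count_space UNIV)"
    and "\<And>j. j \<in> {1..N} \<Longrightarrow> Ps j \<in> measurable M (count_space UNIV)"
    and "N \<ge> 1"
    and abs_cont: "\<And>e. measure M {w \<in> space M. S w = e} > 0 \<Longrightarrow> measure M {w \<in> space M. G w = e} > 0"
    and R_range: "\<And>w. w \<in> space M \<Longrightarrow> R w \<le> N"
    and joint: "\<And>i (e :: nat \<Rightarrow> 'e). i \<le> N \<Longrightarrow>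
        measure M {w \<in> space M. R w = i \<and> (\<forall>j\<in>{1..N}. Ps j w = e j)}
        = measure M {w \<in> space M. R w = i} *
          (\<Prod>j\<in>{1..N}. (if j = i then measure M {w \<in> space M. S w = e j}
                                    else measure M {w \<in> space M. G w = e j}))"
    and piD_pos: "0 < (\<Sum>i\<in>{1..N}. measure M {w \<in> space M. R w = i})"
    and piD_lt1: "(\<Sum>i\<in>{1..N}. measure M {w \<in> space M. R w = i}) < 1"
    and r_pos: "cprob M {w \<in> space M. \<forall>j\<in>{1..N}. LR M S G (Ps j w) = r j}
                        {w \<in> space M. R w = 0} > 0"
  shows "(\<forall>D' \<subseteq> {1..N}.
            cprob M {w \<in> space M. R w \<in> D'} {w \<in> space M. \<forall>j\<in>{1..N}. LR M S G (Ps j w) = r j}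
            = (\<Sum>i\<in>D'. r i * measure M {w \<in> space M. R w = i}) /
              (measure M {w \<in> space M. R w = 0} +
               (\<Sum>k\<in>{1..N}. r k * measure M {w \<in> space M. R w = k})))
       \<and> cprob M {w \<in> space M. \<forall>j\<in>{1..N}. LR M S G (Ps j w) = r j} {w \<in> space M. R w \<in> {1..N}}
         / cprob M {w \<in> space M. \<forall>j\<in>{1..N}. LR M S G (Ps j w) = r j} {w \<in> space M. R w = 0}
         = (\<Sum>i\<in>{1..N}. r i * measure M {w \<in> space M. R w = i}) /
           (\<Sum>i\<in>{1..N}. measure M {w \<in> space M. R w = i})
       \<and> ((\<forall>i\<in>{1..N}. measure M {w \<in> space M. R w = i}
                = (\<Sum>k\<in>{1..N}. measure M {w \<in> space M. R w = k}) / real N) \<longrightarrow>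
          cprob M {w \<in> space M. \<forall>j\<in>{1..N}. LR M S G (Ps j w) = r j} {w \<in> space M. R w \<in> {1..N}}
          / cprob M {w \<in> space M. \<forall>j\<in>{1..N}. LR M S G (Ps j w) = r j} {w \<in> space M. R w = 0}
          = (1 / real N) * (\<Sum>i\<in>{1..N}. r i))"
proof -
  interpret database_model M S G R Ps N
    by (intro database_model.intro database_model_axioms.intro) (rule assms; assumption)+
  (* The hypothesis P(LR_D = r | R = 0) > 0 rules out both degenerate denominators. *)
  have prior_null: "prior 0 \<noteq> 0"
    using r_pos by (auto simp: cprob_def)
  then have likelihood_nonzero: "null_likelihood r \<noteq> 0"
    using r_pos cprob_LR_event_null by simp
  note ratio = likelihood_ratio_database[OF prior_null likelihood_nonzero]
  have uniform_ratio:
    "cprob M (LR_event r) {w \<in> space M. R w \<in> {1..N}} / cprob M (LR_event r) {w \<in> space M. R w = 0}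
     = (1 / real N) * (\<Sum>i\<in>{1..N}. r i)"
    if uniform: "\<forall>i\<in>{1..N}. prior i = (\<Sum>k\<in>{1..N}. prior k) / real N"
  proof -
    have card: "real (card {1..N}) = real N" by simp
    have "(\<Sum>i\<in>{1..N}. prior i) \<noteq> 0" using piD_pos by simp
    then show ?thesis
      unfolding ratio using weighted_mean_uniform[of prior "{1..N}" r, unfolded card] uniform by blast
  qed
  show ?thesis
    using posterior_database[OF likelihood_nonzero] ratio uniform_ratio by blast
qed

end
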